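(* Let $G$ be a graph. For each vertex $v$ let $\mathrm{BFS}(v)$ be a breadth-first search tree of $G$ rooted at $v$ and let $\ell(v)$ be the number of leaves of $\mathrm{BFS}(v)$. Then $\mathrm{gp}(G)\le 1+\min\{\ell(v) : v \text{ is a gp-vertex of } G\}$.
   Context: All graphs are finite, simple and connected. A geodesic is a shortest path. A set $S$ of vertices is a general position set of $G$ if no three vertices of $S$ lie on a common geodesic of $G$; $\mathrm{gp}(G)$ is the maximum cardinality of a general position set, and a general position set of that cardinality is a gp-set. A gp-vertex of $G$ is a vertex lying in at least one gp-set of $G$. *)

theory Defs
  imports Main
begin

definition walk :: "'a set \<Rightarrow> ('a \<Rightarrow> 'a \<Rightarrow> bool) \<Rightarrow> 'a list \<Rightarrow> bool" where
  "walk V E xs \<longleftrightarrow> xs \<noteq> [] \<and> set xs \<subseteq> V \<and> (\<forall>i. Suc i < length xs \<longrightarrow> E (xs ! i) (xs ! Suc i))"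

definition graph :: "'a set \<Rightarrow> ('a \<Rightarrow> 'a \<Rightarrow> bool) \<Rightarrow> bool" where
  "graph V E \<longleftrightarrow> finite V \<and> V \<noteq> {} \<and>
     (\<forall>x y. E x y \<longrightarrow> x \<in> V \<and> y \<in> V) \<and>
     (\<forall>x y. E x y \<longrightarrow> E y x) \<and> (\<forall>x. \<not> E x x) \<and>
     (\<forall>u\<in>V. \<forall>v\<in>V. \<exists>xs. walk V E xs \<and> hd xs = u \<and> last xs = v)"

definition dist :: "'a set \<Rightarrow> ('a \<Rightarrow> 'a \<Rightarrow> bool) \<Rightarrow> 'a \<Rightarrow> 'a \<Rightarrow> nat" where
  "dist V E u v = (LEAST n. \<exists>xs. walk V E xs \<and> hd xs = u \<and> last xs = v \<and> length xs = Suc n)"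

definition geodesic :: "'a set \<Rightarrow> ('a \<Rightarrow> 'a \<Rightarrow> bool) \<Rightarrow> 'a list \<Rightarrow> bool" where
  "geodesic V E xs \<longleftrightarrow> walk V E xs \<and> length xs = Suc (dist V E (hd xs) (last xs))"

definition gp_set :: "'a set \<Rightarrow> ('a \<Rightarrow> 'a \<Rightarrow> bool) \<Rightarrow> 'a set \<Rightarrow> bool" where
  "gp_set V E S \<longleftrightarrow> S \<subseteq> V \<and>
     (\<forall>x\<in>S. \<forall>y\<in>S. \<forall>z\<in>S. x \<noteq> y \<and> y \<noteq> z \<and> x \<noteq> z \<longrightarrow>
        \<not> (\<exists>P. geodesic V E P \<and> x \<in> set P \<and> y \<in> set P \<and> z \<in> set P))"

definition gp :: "'a set \<Rightarrow> ('a \<Rightarrow> 'a \<Rightarrow> bool) \<Rightarrow> nat" where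
  "gp V E = Max (card ` {S. gp_set V E S})"

definition gp_vertex :: "'a set \<Rightarrow> ('a \<Rightarrow> 'a \<Rightarrow> bool) \<Rightarrow> 'a \<Rightarrow> bool" where
  "gp_vertex V E v \<longleftrightarrow> (\<exists>S. gp_set V E S \<and> card S = gp V E \<and> v \<in> S)"

text \<open>A BFS run from v is recorded by its visiting order sigma
  (a list of all vertices, starting with v). The parent of a vertex u \<noteq> v in the BFS
  tree is its earliest-visited neighbour. A list is a BFS visiting order iff it starts at v,
  enumerates V without repetition, every later vertex has an earlier neighbour, and
  vertices (other than v) are visited in nondecreasing order of the position of their
  parent (FIFO queue discipline).\<close>

definition first_nbr_pos :: "('a \<Rightarrow> 'a \<Rightarrow> bool) \<Rightarrow> 'a list \<Rightarrow> 'a \<Rightarrow> nat" where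
  "first_nbr_pos E \<sigma> u = (LEAST i. i < length \<sigma> \<and> E (\<sigma> ! i) u)"

definition bfs_parent :: "('a \<Rightarrow> 'a \<Rightarrow> bool) \<Rightarrow> 'a list \<Rightarrow> 'a \<Rightarrow> 'a" where
  "bfs_parent E \<sigma> u = \<sigma> ! first_nbr_pos E \<sigma> u"

definition bfs_order :: "'a set \<Rightarrow> ('a \<Rightarrow> 'a \<Rightarrow> bool) \<Rightarrow> 'a \<Rightarrow> 'a list \<Rightarrow> bool" where
  "bfs_order V E v \<sigma> \<longleftrightarrow> distinct \<sigma> \<and> set \<sigma> = V \<and> \<sigma> \<noteq> [] \<and> hd \<sigma> = v \<and>
     (\<forall>j. 0 < j \<and> j < length \<sigma> \<longrightarrow> (\<exists>i<j. E (\<sigma> ! i) (\<sigma> ! j))) \<and>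
     (\<forall>j k. 0 < j \<and> j < k \<and> k < length \<sigma> \<longrightarrow>
        first_nbr_pos E \<sigma> (\<sigma> ! j) \<le> first_nbr_pos E \<sigma> (\<sigma> ! k))"

definition bfs_leaves :: "('a \<Rightarrow> 'a \<Rightarrow> bool) \<Rightarrow> 'a list \<Rightarrow> 'a set" where
  "bfs_leaves E \<sigma> = {u \<in> set \<sigma>. u \<noteq> hd \<sigma> \<and>
      \<not> (\<exists>w\<in>set \<sigma>. w \<noteq> hd \<sigma> \<and> bfs_parent E \<sigma> w = u)}"

end

theory Submission imports Defs begin

text \<open>Fix a gp-set S containing v and the BFS tree rooted at v. Every root-to-vertex path of a
  BFS tree is a geodesic, and every vertex lies on the root path of some leaf (take the
  last-visited vertex whose root path contains it). Since v lies on all these paths, no two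
  vertices of S - {v} can share a leaf path, so S - {v} injects into the leaves.\<close>

lemma walk_snoc:
  assumes "walk V E xs" "x \<in> V" "E (last xs) x"
  shows "walk V E (xs @ [x])"
  unfolding walk_def
proof (intro conjI allI impI)
  have "xs \<noteq> []" "set xs \<subseteq> V" using assms(1) by (auto simp: walk_def)
  then show "set (xs @ [x]) \<subseteq> V" using assms(2) by simp
  fix i assume i: "Suc i < length (xs @ [x])"
  show "E ((xs @ [x]) ! i) ((xs @ [x]) ! Suc i)"
  proof (cases "Suc i < length xs")
    case True then show ?thesis using assms(1) by (auto simp: walk_def nth_append)
  next
    case False
    then have "i = length xs - 1" using i by auto
    then show ?thesis using \<open>xs \<noteq> []\<close> assms(3) False by (auto simp: nth_append last_conv_nth)
  qed
qed simp

lemma first_nbr_pos_le: "i < length \<sigma> \<Longrightarrow> E (\<sigma> ! i) u \<Longrightarrow> first_nbr_pos E \<sigma> u \<le> i"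
  unfolding first_nbr_pos_def by (intro Least_le) simp

text \<open>The path from the root to the k-th visited vertex in the BFS tree. In a BFS order the
  guard holds for every positive k; it is there only to make the recursion terminate.\<close>
fun bfs_path :: "('a \<Rightarrow> 'a \<Rightarrow> bool) \<Rightarrow> 'a list \<Rightarrow> nat \<Rightarrow> 'a list" where
  "bfs_path E \<sigma> k = (if 0 < k \<and> first_nbr_pos E \<sigma> (\<sigma> ! k) < k
     then bfs_path E \<sigma> (first_nbr_pos E \<sigma> (\<sigma> ! k)) @ [\<sigma> ! k] else [\<sigma> ! k])"

declare bfs_path.simps [simp del]

locale bfs_run =
  fixes V :: "'a set" and E :: "'a \<Rightarrow> 'a \<Rightarrow> bool" and v :: 'a and \<sigma> :: "'a list"
  assumes order: "bfs_order V E v \<sigma>"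
begin

abbreviation parent_pos :: "nat \<Rightarrow> nat" where
  "parent_pos k \<equiv> first_nbr_pos E \<sigma> (\<sigma> ! k)"

lemma distinct: "distinct \<sigma>" and set_eq: "set \<sigma> = V" and nonempty: "\<sigma> \<noteq> []"
  and hd_eq: "hd \<sigma> = v"
  using order unfolding bfs_order_def by auto

lemma nth_0: "\<sigma> ! 0 = v"
  using nonempty hd_eq by (simp add: hd_conv_nth)

lemma nth_eq_iff: "i < length \<sigma> \<Longrightarrow> j < length \<sigma> \<Longrightarrow> \<sigma> ! i = \<sigma> ! j \<longleftrightarrow> i = j"
  using distinct by (simp add: nth_eq_iff_index_eq)

lemma
  assumes "0 < k" "k < length \<sigma>"
  shows parent_pos_less: "parent_pos k < k"
    and adjacent_parent: "E (\<sigma> ! parent_pos k) (\<sigma> ! k)"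
proof -
  obtain i where i: "i < k" "E (\<sigma> ! i) (\<sigma> ! k)"
    using order assms unfolding bfs_order_def by blast
  show "parent_pos k < k" using first_nbr_pos_le[of i \<sigma> E "\<sigma> ! k"] i assms by simp
  have "parent_pos k < length \<sigma> \<and> E (\<sigma> ! parent_pos k) (\<sigma> ! k)"
    unfolding first_nbr_pos_def by (rule LeastI[of _ i]) (use i assms in simp)
  then show "E (\<sigma> ! parent_pos k) (\<sigma> ! k)" by simp
qed

lemma parent_pos_mono: "0 < j \<Longrightarrow> j \<le> k \<Longrightarrow> k < length \<sigma> \<Longrightarrow> parent_pos j \<le> parent_pos k"
  using order unfolding bfs_order_def by (cases "j = k") auto

lemma bfs_path_0: "bfs_path E \<sigma> 0 = [v]"
  using nth_0 by (simp add: bfs_path.simps)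

lemma bfs_path_step:
  "0 < k \<Longrightarrow> k < length \<sigma> \<Longrightarrow> bfs_path E \<sigma> k = bfs_path E \<sigma> (parent_pos k) @ [\<sigma> ! k]"
  using parent_pos_less by (subst bfs_path.simps) simp

lemma hd_last_bfs_path:
  "k < length \<sigma> \<Longrightarrow> bfs_path E \<sigma> k \<noteq> [] \<and> hd (bfs_path E \<sigma> k) = v \<and> last (bfs_path E \<sigma> k) = \<sigma> ! k"
proof (induction k rule: less_induct)
  case (less k)
  then show ?case
    using bfs_path_0 nth_0 bfs_path_step[of k] parent_pos_less[of k] by (cases "k = 0") auto
qed

lemma set_bfs_path: "k < length \<sigma> \<Longrightarrow> set (bfs_path E \<sigma> k) \<subseteq> {\<sigma> ! j | j. j \<le> k}"
proof (induction k rule: less_induct)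
  case (less k)
  show ?case
  proof (cases "k = 0")
    case True then show ?thesis using bfs_path_0 nth_0 by auto
  next
    case False
    then have "parent_pos k < k" using parent_pos_less less.prems by simp
    then show ?thesis
      using less bfs_path_step[of k] False by fastforce
  qed
qed

lemma walk_bfs_path: "k < length \<sigma> \<Longrightarrow> walk V E (bfs_path E \<sigma> k)"
proof (induction k rule: less_induct)
  case (less k)
  show ?case
  proof (cases "k = 0")
    case True then show ?thesis using bfs_path_0 nonempty set_eq hd_eq by (auto simp: walk_def)
  next
    case False
    then have "parent_pos k < k" using parent_pos_less less.prems by simp
    then show ?thesis
      using less False bfs_path_step[of k] hd_last_bfs_path[of "parent_pos k"] adjacent_parent[of k]
        set_eq by (auto intro!: walk_snoc)
  qed
qed

lemma length_bfs_path_mono: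
  "k < length \<sigma> \<Longrightarrow> j \<le> k \<Longrightarrow> length (bfs_path E \<sigma> j) \<le> length (bfs_path E \<sigma> k)"
proof (induction k arbitrary: j rule: less_induct)
  case (less k)
  show ?case
  proof (cases "j = 0 \<or> j = k")
    case True then show ?thesis using bfs_path_0 hd_last_bfs_path[of k] less.prems
      by (cases "bfs_path E \<sigma> k") auto
  next
    case False
    then have j: "0 < j" "j < k" using less.prems by auto
    have "parent_pos j < j" "parent_pos k < k" using parent_pos_less j less.prems by auto
    moreover have "parent_pos j \<le> parent_pos k" using parent_pos_mono j less.prems by simp
    ultimately show ?thesis
      using less.IH[of "parent_pos k" "parent_pos j"] bfs_path_step[of j] bfs_path_step[of k] j less.prems
      by simp
  qed
qed

text \<open>The FIFO discipline makes the tree depth a 1-Lipschitz function along edges.\<close>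
lemma length_bfs_path_adjacent:
  assumes "a < length \<sigma>" "b < length \<sigma>" "E (\<sigma> ! a) (\<sigma> ! b)"
  shows "length (bfs_path E \<sigma> b) \<le> Suc (length (bfs_path E \<sigma> a))"
proof (cases "0 < b \<and> a < b")
  case True
  then have "parent_pos b \<le> a" using first_nbr_pos_le[of a \<sigma> E "\<sigma> ! b"] assms by simp
  then show ?thesis
    using length_bfs_path_mono[of a "parent_pos b"] bfs_path_step[of b] True assms by simp
next
  case False
  then show ?thesis using length_bfs_path_mono[of a b] bfs_path_0 assms hd_last_bfs_path[of a]
    by (cases "bfs_path E \<sigma> a") (auto simp: not_less)
qed

lemma walk_from_root_reaches_depth:
  assumes "walk V E xs" "hd xs = v" "i < length xs"
  shows "\<exists>k < length \<sigma>. \<sigma> ! k = xs ! i \<and> length (bfs_path E \<sigma> k) \<le> Suc i"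
  using assms(3)
proof (induction i)
  case 0
  then show ?case using assms(1,2) nonempty nth_0 bfs_path_0 by (intro exI[of _ 0]) (auto simp: hd_conv_nth)
next
  case (Suc i)
  then obtain k where k: "k < length \<sigma>" "\<sigma> ! k = xs ! i" "length (bfs_path E \<sigma> k) \<le> Suc i"
    by auto
  have "xs ! Suc i \<in> V" "E (xs ! i) (xs ! Suc i)" using assms(1) Suc.prems by (auto simp: walk_def)
  then obtain m where m: "m < length \<sigma>" "\<sigma> ! m = xs ! Suc i"
    using set_eq by (metis in_set_conv_nth)
  then show ?case using length_bfs_path_adjacent[of k m] k \<open>E (xs ! i) (xs ! Suc i)\<close> by auto
qed

lemma length_bfs_path_eq_Suc_dist:
  assumes "k < length \<sigma>"
  shows "length (bfs_path E \<sigma> k) = Suc (dist V E v (\<sigma> ! k))"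
proof -
  let ?P = "\<lambda>m. \<exists>xs. walk V E xs \<and> hd xs = v \<and> last xs = \<sigma> ! k \<and> length xs = Suc m"
  have "?P (length (bfs_path E \<sigma> k) - 1)"
    using walk_bfs_path hd_last_bfs_path assms by (intro exI[of _ "bfs_path E \<sigma> k"]) auto
  then have le: "dist V E v (\<sigma> ! k) \<le> length (bfs_path E \<sigma> k) - 1"
    and "?P (dist V E v (\<sigma> ! k))"
    unfolding dist_def by (auto intro: Least_le LeastI)
  then obtain xs where xs: "walk V E xs" "hd xs = v" "last xs = \<sigma> ! k"
    "length xs = Suc (dist V E v (\<sigma> ! k))" by blast
  then obtain m where m: "m < length \<sigma>" "\<sigma> ! m = xs ! (length xs - 1)"
    "length (bfs_path E \<sigma> m) \<le> length xs"
    using walk_from_root_reaches_depth[OF xs(1,2), of "length xs - 1"] by auto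
  have "\<sigma> ! m = \<sigma> ! k" using m(2) xs(3,4) by (metis diff_Suc_1 last_conv_nth list.size(3) nat.distinct(1))
  then have "length (bfs_path E \<sigma> k) \<le> length xs" using m(1,3) assms nth_eq_iff by simp
  moreover have "0 < length (bfs_path E \<sigma> k)" using hd_last_bfs_path assms by simp
  ultimately show ?thesis using xs(4) le by linarith
qed

lemma geodesic_bfs_path: "k < length \<sigma> \<Longrightarrow> geodesic V E (bfs_path E \<sigma> k)"
  using walk_bfs_path hd_last_bfs_path length_bfs_path_eq_Suc_dist unfolding geodesic_def by auto

lemma bfs_path_through_leaf:
  assumes "0 < i" "i < length \<sigma>"
  obtains k where "k < length \<sigma>" "\<sigma> ! i \<in> set (bfs_path E \<sigma> k)" "\<sigma> ! k \<in> bfs_leaves E \<sigma>"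
proof -
  let ?D = "{k. k < length \<sigma> \<and> \<sigma> ! i \<in> set (bfs_path E \<sigma> k)}"
  have "i \<in> ?D" using hd_last_bfs_path[OF assms(2)] assms(2) last_in_set by fastforce
  moreover have "finite ?D" by simp
  ultimately obtain k where k: "k \<in> ?D" and k_max: "\<And>m. m \<in> ?D \<Longrightarrow> m \<le> k"
    using Max_in Max_ge by blast
  obtain j where "j \<le> k" "\<sigma> ! i = \<sigma> ! j" using set_bfs_path[of k] k by auto
  then have "0 < k" using assms nth_eq_iff[of i j] k by auto
  have "\<sigma> ! k \<in> bfs_leaves E \<sigma>" unfolding bfs_leaves_def
  proof safe
    show "\<sigma> ! k \<in> set \<sigma>" using k by simp
    show "\<sigma> ! k = hd \<sigma> \<Longrightarrow> False"
      using \<open>0 < k\<close> k nth_eq_iff[of k 0] nonempty by (simp add: hd_conv_nth)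
    fix w assume w: "w \<in> set \<sigma>" "w \<noteq> hd \<sigma>" "bfs_parent E \<sigma> w = \<sigma> ! k"
    obtain m where m: "m < length \<sigma>" "\<sigma> ! m = w" using w(1) by (metis in_set_conv_nth)
    have "0 < m" using m w(2) nonempty by (metis gr0I hd_conv_nth)
    then have "parent_pos m < m" using parent_pos_less m(1) by simp
    moreover have "parent_pos m = k"
      using w(3) m \<open>parent_pos m < m\<close> k nth_eq_iff unfolding bfs_parent_def by simp
    ultimately have "m \<in> ?D" using k m bfs_path_step[of m] \<open>0 < m\<close> by auto
    then show False using k_max \<open>parent_pos m < m\<close> \<open>parent_pos m = k\<close> by fastforce
  qed
  then show thesis using that k by blast
qed

lemma gp_set_card_le_leaves:
  assumes "gp_set V E S" "v \<in> S"
  shows "card S \<le> 1 + card (bfs_leaves E \<sigma>)"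
proof -
  have SV: "S \<subseteq> V" using assms(1) unfolding gp_set_def by simp
  have "\<forall>u \<in> S - {v}. \<exists>k. k < length \<sigma> \<and> u \<in> set (bfs_path E \<sigma> k) \<and> \<sigma> ! k \<in> bfs_leaves E \<sigma>"
  proof
    fix u assume u: "u \<in> S - {v}"
    then have "u \<in> set \<sigma>" using SV set_eq by blast
    then obtain i where i: "i < length \<sigma>" "\<sigma> ! i = u" by (auto simp: in_set_conv_nth)
    then have "0 < i" using u nth_0 by (cases i) auto
    then obtain k where "k < length \<sigma>" "\<sigma> ! i \<in> set (bfs_path E \<sigma> k)" "\<sigma> ! k \<in> bfs_leaves E \<sigma>"
      using bfs_path_through_leaf i(1) by blast
    then show "\<exists>k. k < length \<sigma> \<and> u \<in> set (bfs_path E \<sigma> k) \<and> \<sigma> ! k \<in> bfs_leaves E \<sigma>"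
      using i(2) by blast
  qed
  from bchoice[OF this] obtain g where g: "\<forall>u \<in> S - {v}.
      g u < length \<sigma> \<and> u \<in> set (bfs_path E \<sigma> (g u)) \<and> \<sigma> ! g u \<in> bfs_leaves E \<sigma>" ..
  have "inj_on (\<lambda>u. \<sigma> ! g u) (S - {v})"
  proof (rule inj_onI, rule ccontr)
    fix x y assume x: "x \<in> S - {v}" and y: "y \<in> S - {v}" and "\<sigma> ! g x = \<sigma> ! g y" "x \<noteq> y"
    have gx: "g x < length \<sigma>" "x \<in> set (bfs_path E \<sigma> (g x))" using g x by simp_all
    have gy: "g y < length \<sigma>" "y \<in> set (bfs_path E \<sigma> (g y))" using g y by simp_all
    have "g x = g y" using nth_eq_iff[OF gx(1) gy(1)] \<open>\<sigma> ! g x = \<sigma> ! g y\<close> by simp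
    let ?P = "bfs_path E \<sigma> (g x)"
    have "geodesic V E ?P" using geodesic_bfs_path[OF gx(1)] .
    moreover have "y \<in> set ?P" using gy(2) \<open>g x = g y\<close> by simp
    moreover have "v \<in> set ?P" using hd_last_bfs_path[OF gx(1)] hd_in_set by metis
    ultimately show False using assms x y gx(2) \<open>x \<noteq> y\<close> unfolding gp_set_def by blast
  qed
  moreover have "(\<lambda>u. \<sigma> ! g u) ` (S - {v}) \<subseteq> bfs_leaves E \<sigma>" using g by blast
  moreover have "finite (bfs_leaves E \<sigma>)" unfolding bfs_leaves_def by simp
  ultimately have "card (S - {v}) \<le> card (bfs_leaves E \<sigma>)" by (rule card_inj_on_le)
  moreover have "finite S" using SV set_eq finite_subset by blast
  ultimately show ?thesis using assms(2) by (simp add: card_Diff_singleton)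
qed

lemma gp_le_card_bfs_leaves:
  assumes "gp_vertex V E v"
  shows "gp V E \<le> 1 + card (bfs_leaves E \<sigma>)"
proof -
  obtain S where S: "gp_set V E S" "card S = gp V E" "v \<in> S"
    using assms unfolding gp_vertex_def by blast
  then show ?thesis using gp_set_card_le_leaves[OF S(1,3)] by simp
qed

end

lemma gp_set_subset: "gp_set V E S \<Longrightarrow> S \<subseteq> V"
  unfolding gp_set_def by (rule conjunct1)

lemma gp_vertex_in_vertices: "gp_vertex V E v \<Longrightarrow> v \<in> V"
  unfolding gp_vertex_def using gp_set_subset by blast

lemma gp_set_of_card_gp:
  assumes "finite V"
  obtains S where "gp_set V E S" "card S = gp V E"
proof -
  have "{S. gp_set V E S} \<subseteq> Pow V" using gp_set_subset by blast
  then have "finite {S. gp_set V E S}" using assms finite_subset by blast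
  moreover have "gp_set V E {}" by (simp add: gp_set_def)
  ultimately have "gp V E \<in> card ` {S. gp_set V E S}" unfolding gp_def by (intro Max_in) auto
  then show thesis using that by (auto simp del: card_eq_0_iff)
qed

theorem corollary3p4:
  fixes V :: "'a set" and E :: "'a \<Rightarrow> 'a \<Rightarrow> bool" and \<sigma> :: "'a \<Rightarrow> 'a list"
  assumes "graph V E"
    and "\<forall>v\<in>V. bfs_order V E v (\<sigma> v)"
  shows "gp V E \<le> 1 + Min {card (bfs_leaves E (\<sigma> v)) | v. gp_vertex V E v}"
proof -
  let ?M = "{card (bfs_leaves E (\<sigma> v)) | v. gp_vertex V E v}"
  have "finite V" using assms(1) unfolding graph_def by simp
  then obtain S where S: "gp_set V E S" "card S = gp V E" by (rule gp_set_of_card_gp)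
  show ?thesis
  proof (cases "S = {}")
    case True then show ?thesis using S by simp
  next
    case False
    then obtain w where "w \<in> S" by blast
    then have "gp_vertex V E w" using S unfolding gp_vertex_def by blast
    then have "?M \<noteq> {}" by blast
    moreover have "?M \<subseteq> (\<lambda>v. card (bfs_leaves E (\<sigma> v))) ` V"
      by (auto dest: gp_vertex_in_vertices)
    then have "finite ?M" using \<open>finite V\<close> finite_subset by blast
    ultimately have "Min ?M \<in> ?M" by (rule Min_in[rotated])
    then obtain v where v: "gp_vertex V E v" "Min ?M = card (bfs_leaves E (\<sigma> v))" by blast
    have "bfs_run V E v (\<sigma> v)"
      using assms(2) gp_vertex_in_vertices[OF v(1)] by (simp add: bfs_run_def)
    then show ?thesis using bfs_run.gp_le_card_bfs_leaves[OF _ v(1)] v(2) by simp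
  qed
qed

end
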